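(* Fix $a, b > 0$, $\delta_1, \delta_2 > 0$, $0 < x < 1$, and $\varepsilon_{1,1}, \varepsilon_{1,2} > 0$. Let $j_1$ be a positive integer such that $$1 - e^{-\delta_1}\sum_{j=0}^{j_1-1}\frac{\delta_1^j}{j!} < \varepsilon_{1,2}.$$ For each $j = 0, 1, \dots, j_1-1$, let $n_j$ be a nonnegative integer such that $$e^{-\delta_1}\frac{\delta_1^j}{j!}\Big(1 - e^{-\delta_2}\sum_{l=0}^{n_j-1}\frac{\delta_2^l}{l!}\Big) < \varepsilon_{1,1}.$$ Define the truncated sum $\hat B = \sum_{j=0}^{j_1-1}\sum_{l=0}^{n_j-1} L_{j,l}$. Define $$U1_{a,b}^{\delta_1,\delta_2}(x) = 1 - e^{-(\delta_1+\delta_2)}\sum_{j=0}^{j_1-1}\frac{\delta_1^j}{j!}\sum_{l=0}^{n_j-1}\frac{\delta_2^l}{l!}.$$ Then $$B_{a,b}^{\delta_1,\delta_2}(x) - \hat B < U1_{a,b}^{\delta_1,\delta_2}(x) < j_1\varepsilon_{1,1} + \varepsilon_{1,2}.$$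
   Context: For $p, q > 0$, $I_x(p,q) = \frac{\int_0^x t^{p-1}(1-t)^{q-1}\,dt}{B(p,q)}$ is the regularized incomplete beta function, where $B(p,q) = \Gamma(p)\Gamma(q)/\Gamma(p+q)$. The CDF of the doubly non-central beta distribution with parameters $a, b$ and $\delta_1, \delta_2$ is $$B_{a,b}^{\delta_1,\delta_2}(x) = \sum_{j=0}^\infty\sum_{l=0}^\infty L_{j,l}, \qquad L_{j,l} = e^{-(\delta_1+\delta_2)}\frac{\delta_1^j\delta_2^l}{j!\,l!}\,I_x(j+a, l+b).$$ Empty sums are zero. *)

theory Defs
  imports "HOL-Analysis.Analysis"
begin

definition inc_beta_reg :: "real \<Rightarrow> real \<Rightarrow> real \<Rightarrow> real" where
  "inc_beta_reg x p q =
     integral {0..x} (\<lambda>t. t powr (p - 1) * (1 - t) powr (q - 1)) / Beta p q"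

definition L_term :: "real \<Rightarrow> real \<Rightarrow> real \<Rightarrow> real \<Rightarrow> real \<Rightarrow> nat \<Rightarrow> nat \<Rightarrow> real" where
  "L_term a b d1 d2 x j l =
     exp (-(d1 + d2)) * (d1 ^ j * d2 ^ l / (fact j * fact l)) * inc_beta_reg x (real j + a) (real l + b)"

definition dncbeta_cdf :: "real \<Rightarrow> real \<Rightarrow> real \<Rightarrow> real \<Rightarrow> real \<Rightarrow> real" where
  "dncbeta_cdf a b d1 d2 x = (\<Sum>\<^sub>\<infinity>(j, l) \<in> UNIV. L_term a b d1 d2 x j l)"

end

theory Submission
  imports Defs
begin

text \<open>Every term factors as \<open>L\<^sub>j\<^sub>,\<^sub>l = P\<^sub>\<delta>\<^sub>1(j) P\<^sub>\<delta>\<^sub>2(l) I\<^sub>x(j+a, l+b)\<close> with Poisson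
  weights \<open>P\<^sub>\<delta>(k) = e\<^sup>-\<^sup>\<delta> \<delta>\<^sup>k/k!\<close>. The product weights sum to 1 and \<open>0 \<le> I\<^sub>x < 1\<close>, so the
  tail of the series beyond the truncation set is strictly smaller than the tail of the weights,
  which is \<open>U1\<close>. Splitting the weights row by row, \<open>U1\<close> is the Poisson tail of \<open>\<delta>\<^sub>1\<close> beyond
  \<open>j\<^sub>1\<close> plus, for each \<open>j < j\<^sub>1\<close>, the \<open>\<delta>\<^sub>2\<close>-tail of row \<open>j\<close> weighted by \<open>P\<^sub>\<delta>\<^sub>1(j)\<close>; each
  of these \<open>j\<^sub>1 + 1\<close> pieces is below its \<open>\<epsilon>\<close>.\<close>

lemma Beta_real_pos:
  fixes p q :: real
  assumes "p > 0" "q > 0"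
  shows "Beta p q > 0"
  using assms by (simp add: Beta_def Gamma_real_pos)

lemma inc_beta_reg_nonneg_less_one:
  fixes p q x :: real
  assumes p: "p > 0" and q: "q > 0" and x: "0 < x" "x < 1"
  shows "0 \<le> inc_beta_reg x p q \<and> inc_beta_reg x p q < 1"
proof -
  define f where "f t = t powr (p - 1) * (1 - t) powr (q - 1)" for t :: real
  define c where "c = (1 + x) / 2"
  have c: "x < c" "c < 1" using x by (auto simp: c_def)
  have int01: "(f has_integral Beta p q) {0..1}"
    unfolding f_def using has_integral_Beta_real[OF p q] .
  have integrable: "f integrable_on {u..v}" if "0 \<le> u" "v \<le> 1" for u v
    using integrable_subinterval_real[OF has_integral_integrable[OF int01]] that by auto
  have f_nonneg: "\<And>t. 0 \<le> f t" by (simp add: f_def)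
  \<comment> \<open>\<open>f\<close> may blow up at 1, so strict positivity is taken on \<open>[x, c]\<close>, where \<open>f\<close> is continuous.\<close>
  have "integral {x..c} (\<lambda>_. 0) < integral {x..c} f"
    by (rule integral_less_real) (use x c in \<open>auto simp: f_def intro!: continuous_intros\<close>)
  then have "integral {0..x} f < integral {0..x} f + integral {x..c} f"
    by simp
  also have "\<dots> = integral {0..c} f"
    using Henstock_Kurzweil_Integration.integral_combine[where a=0 and c=x and b=c and f=f]
      integrable[of 0 c] x c by simp
  also have "\<dots> \<le> integral {0..1} f"
    using integrable[of 0 c] integrable[of 0 1] c x
    by (intro integral_subset_le) (auto simp: f_nonneg)
  also have "\<dots> = Beta p q"
    using int01 by blast
  finally have "integral {0..x} f < Beta p q" .
  moreover have "0 \<le> integral {0..x} f"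
    using integrable[of 0 x] x by (intro integral_nonneg) (auto simp: f_nonneg)
  ultimately show ?thesis
    using Beta_real_pos[OF p q] unfolding inc_beta_reg_def f_def[symmetric] by simp
qed

definition poisson_weight :: "real \<Rightarrow> nat \<Rightarrow> real" where
  "poisson_weight d k = exp (- d) * (d ^ k / fact k)"

lemma poisson_weight_pos: "d > 0 \<Longrightarrow> poisson_weight d k > 0"
  by (simp add: poisson_weight_def)

lemma sum_poisson_weight:
  "(\<Sum>k\<in>K. poisson_weight d k) = exp (- d) * (\<Sum>k\<in>K. d ^ k / fact k)"
  by (simp add: poisson_weight_def sum_distrib_left)

lemma sum_poisson_weight_product:
  assumes "finite J" "\<And>j. j \<in> J \<Longrightarrow> finite (N j)"
  shows "exp (-(d1 + d2)) * (\<Sum>j\<in>J. d1 ^ j / fact j * (\<Sum>l\<in>N j. d2 ^ l / fact l)) =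
     (\<Sum>(j, l)\<in>Sigma J N. poisson_weight d1 j * poisson_weight d2 l)"
  using assms by (simp add: poisson_weight_def exp_add[symmetric] sum.Sigma[symmetric]
      sum_distrib_left sum_distrib_right mult_ac)

lemma poisson_weight_has_sum:
  assumes "d \<ge> 0"
  shows "(poisson_weight d has_sum 1) UNIV"
proof -
  have "(\<lambda>k. d ^ k / fact k) sums exp d"
    using exp_converges[of d] by (simp add: divide_inverse mult.commute)
  then have "poisson_weight d sums (exp (- d) * exp d)"
    unfolding poisson_weight_def by (rule sums_mult)
  then have "poisson_weight d sums 1"
    by (simp add: exp_minus)
  then show ?thesis
    by (rule sums_nonneg_imp_has_sum) (simp add: poisson_weight_def assms)
qed

lemma L_term_eq_poisson_weights:
  "L_term a b d1 d2 x j l =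
     poisson_weight d1 j * poisson_weight d2 l * inc_beta_reg x (real j + a) (real l + b)"
  by (simp add: L_term_def poisson_weight_def exp_add[symmetric] field_simps)

lemma has_sum_product_nonneg:
  fixes p q :: "'a \<Rightarrow> real"
  assumes p: "(p has_sum s) A" and q: "(q has_sum t) B"
    and nonneg: "\<And>j. 0 \<le> p j" "\<And>l. 0 \<le> q l"
  shows "((\<lambda>(j, l). p j * q l) has_sum s * t) (A \<times> B)"
proof -
  have rows: "((\<lambda>l. p j * q l) has_sum p j * t) B" for j
    using has_sum_cmult_right[OF q] .
  have cols: "((\<lambda>j. p j * t) has_sum s * t) A"
    using has_sum_cmult_left[OF p] .
  have "(\<lambda>(j, l). p j * q l) summable_on A \<times> B"
    using rows has_sum_imp_summable[OF cols] nonneg by (intro summable_on_SigmaI) auto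
  then show ?thesis
    using rows cols by (intro has_sum_SigmaI) auto
qed

lemma has_sum_weighted_tail_less:
  fixes w c :: "'a \<Rightarrow> real"
  assumes w: "(w has_sum s) A" and F: "finite F" "F \<subseteq> A" and z: "z \<in> A - F"
    and w_nonneg: "\<And>y. 0 \<le> w y" and c: "\<And>y. 0 \<le> c y" "\<And>y. c y \<le> 1"
    and z_strict: "w z > 0" "c z < 1"
  shows "(\<Sum>\<^sub>\<infinity>y\<in>A. w y * c y) - (\<Sum>y\<in>F. w y * c y) < s - sum w F"
proof (rule has_sum_strict_mono)
  have wc_le: "w y * c y \<le> w y" for y
    using w_nonneg[of y] c(2)[of y] by (simp add: mult_left_le)
  then show "\<And>y. y \<in> A - F \<Longrightarrow> w y * c y \<le> w y" .
  have "(\<lambda>y. w y * c y) summable_on A"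
    by (rule summable_on_comparison_test[OF has_sum_imp_summable[OF w]])
       (simp_all add: wc_le c(1) w_nonneg)
  then show "((\<lambda>y. w y * c y) has_sum
      (\<Sum>\<^sub>\<infinity>y\<in>A. w y * c y) - (\<Sum>y\<in>F. w y * c y)) (A - F)"
    by (rule has_sum_Diff[OF has_sum_infsum has_sum_finiteI[OF F(1) refl] F(2)])
  show "(w has_sum s - sum w F) (A - F)"
    by (rule has_sum_Diff[OF w has_sum_finiteI[OF F(1) refl] F(2)])
  show "z \<in> A - F" by (rule z)
  show "w z * c z < w z"
    using z_strict by simp
qed

lemma sum_product_tail_less:
  fixes p q :: "nat \<Rightarrow> real" and n :: "nat \<Rightarrow> nat"
  assumes "1 - (\<Sum>j<j1. p j) < e12"
    and "\<And>j. j < j1 \<Longrightarrow> p j * (1 - (\<Sum>l<n j. q l)) < e11"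
  shows "1 - (\<Sum>(j, l)\<in>Sigma {..<j1} (\<lambda>j. {..<n j}). p j * q l) < real j1 * e11 + e12"
proof -
  have "1 - (\<Sum>(j, l)\<in>Sigma {..<j1} (\<lambda>j. {..<n j}). p j * q l)
      = (1 - (\<Sum>j<j1. p j)) + (\<Sum>j<j1. p j * (1 - (\<Sum>l<n j. q l)))"
    by (simp add: sum.Sigma[symmetric] sum_distrib_left right_diff_distrib sum_subtractf)
  also have "(\<Sum>j<j1. p j * (1 - (\<Sum>l<n j. q l))) \<le> (\<Sum>j<j1. e11)"
    using assms(2) by (intro sum_mono less_imp_le) auto
  finally show ?thesis
    using assms(1) by simp
qed

theorem mainTheorem3:
  fixes a b d1 d2 x e11 e12 :: real and j1 :: nat and n :: "nat \<Rightarrow> nat"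
  assumes "a > 0" "b > 0" "d1 > 0" "d2 > 0" "0 < x" "x < 1" "e11 > 0" "e12 > 0"
    and "j1 > 0"
    and "1 - exp (- d1) * (\<Sum>j<j1. d1 ^ j / fact j) < e12"
    and "\<And>j. j < j1 \<Longrightarrow>
           exp (- d1) * (d1 ^ j / fact j) * (1 - exp (- d2) * (\<Sum>l<n j. d2 ^ l / fact l)) < e11"
  shows "dncbeta_cdf a b d1 d2 x - (\<Sum>j<j1. \<Sum>l<n j. L_term a b d1 d2 x j l)
           < 1 - exp (-(d1 + d2)) * (\<Sum>j<j1. d1 ^ j / fact j * (\<Sum>l<n j. d2 ^ l / fact l))
       \<and> 1 - exp (-(d1 + d2)) * (\<Sum>j<j1. d1 ^ j / fact j * (\<Sum>l<n j. d2 ^ l / fact l))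
           < real j1 * e11 + e12"
proof -
  define w where "w = (\<lambda>(j, l). poisson_weight d1 j * poisson_weight d2 l)"
  define c where "c = (\<lambda>(j, l). inc_beta_reg x (real j + a) (real l + b))"
  define F where "F = Sigma {..<j1} (\<lambda>j. {..<n j})"
  have L: "L_term a b d1 d2 x j l = w (j, l) * c (j, l)" for j l
    by (simp add: L_term_eq_poisson_weights w_def c_def)
  have U1: "exp (-(d1 + d2)) * (\<Sum>j<j1. d1 ^ j / fact j * (\<Sum>l<n j. d2 ^ l / fact l)) = sum w F"
    unfolding F_def w_def by (rule sum_poisson_weight_product) auto
  have w_has_sum: "(w has_sum 1) UNIV"
    using has_sum_product_nonneg[OF poisson_weight_has_sum poisson_weight_has_sum] assms(3,4)
    by (simp add: w_def less_imp_le poisson_weight_pos)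
  have "(\<Sum>\<^sub>\<infinity>y. w y * c y) - (\<Sum>y\<in>F. w y * c y) < 1 - sum w F"
    using inc_beta_reg_nonneg_less_one assms(1-6)
    by (intro has_sum_weighted_tail_less[OF w_has_sum, where z = "(j1, 0)"])
       (auto simp: F_def w_def c_def less_imp_le poisson_weight_pos)
  moreover have "1 - sum w F < real j1 * e11 + e12"
    unfolding F_def w_def
  proof (rule sum_product_tail_less)
    show "1 - (\<Sum>j<j1. poisson_weight d1 j) < e12"
      using assms(10) unfolding sum_poisson_weight .
    show "poisson_weight d1 j * (1 - (\<Sum>l<n j. poisson_weight d2 l)) < e11" if "j < j1" for j
      using assms(11)[OF that] unfolding sum_poisson_weight unfolding poisson_weight_def .
  qed
  moreover have "dncbeta_cdf a b d1 d2 x = (\<Sum>\<^sub>\<infinity>y. w y * c y)"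
    by (simp add: dncbeta_cdf_def L case_prod_unfold)
  moreover have "(\<Sum>j<j1. \<Sum>l<n j. L_term a b d1 d2 x j l) = (\<Sum>y\<in>F. w y * c y)"
    by (simp add: F_def sum.Sigma L)
  ultimately show ?thesis
    unfolding U1 by simp
qed

end
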